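(* Let $K$ be a finite extension of $\mathbb{Q}_p$ with absolute value $|\cdot|_K$, let $X\subseteq K$ be a finite nonempty set, and let $\mathscr{C}$ be a verticial clustering of $X$. For each $C\in\mathscr{C}$ let $a_C\in K$ be a centre of $C$, and set ${\bf a}=(a_C)_{C\in\mathscr{C}}$. Define $$\mathrm{Intra}(\mathscr{C})=\frac{1}{|X|}\sum_{C\in\mathscr{C}}\sum_{x\in C}|x-a_C|_K,\qquad \mathrm{Inter}(\mathscr{C})=\min_{C\neq C'\in\mathscr{C}}|a_C-a_{C'}|_K .$$ Then $\mathrm{Intra}(\mathscr{C})$ and $\mathrm{Inter}(\mathscr{C})$ do not depend on the choice of the cluster centres ${\bf a}$: any two families of centres give the same values.
   Context: A clustering of a finite set $X\subseteq K$ is a partition $\mathscr{C}$ of $X$ into nonempty clusters. For a cluster $C$, let $\mathbb{D}_C$ denote the smallest closed disk $\{y\in K: |y-b|_K\le r\}$ in $K$ containing $C$. The clustering is verticial if every cluster $C\in\mathscr{C}$ corresponds to a vertex of the dendrogram of $X$, i.e. $C=X\cap\mathbb{D}_C$. Given a clustering $\mathscr{C}$ and a family ${\bf a}=(a_C)_{C\in\mathscr{C}}$ of points of $K$, put $E(\mathscr{C},{\bf a})=\sum_{C\in\mathscr{C}}\sum_{x\in C}|x-a_C|_K$. A family of centres of $\mathscr{C}$ is a family ${\bf a}$ minimising $E(\mathscr{C},{\bf a})$ for the given clustering $\mathscr{C}$; equivalently, each $a_C$ minimises $a\mapsto\sum_{x\in C}|x-a|_K$ over $a\in K$. *)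

theory Defs
  imports Complex_Main "HOL-Computational_Algebra.Primes"
begin

definition abs_value :: "('k::field \<Rightarrow> real) \<Rightarrow> bool" where
  "abs_value v \<longleftrightarrow> (\<forall>x. 0 \<le> v x) \<and> (\<forall>x. v x = 0 \<longleftrightarrow> x = 0)
     \<and> (\<forall>x y. v (x * y) = v x * v y) \<and> (\<forall>x y. v (x + y) \<le> v x + v y)"

definition ultrametric_av :: "('k::field \<Rightarrow> real) \<Rightarrow> bool" where
  "ultrametric_av v \<longleftrightarrow> (\<forall>x y. v (x + y) \<le> max (v x) (v y))"

definition av_cauchy :: "('k::field \<Rightarrow> real) \<Rightarrow> (nat \<Rightarrow> 'k) \<Rightarrow> bool" where
  "av_cauchy v s \<longleftrightarrow> (\<forall>e>0. \<exists>N. \<forall>m\<ge>N. \<forall>n\<ge>N. v (s m - s n) < e)"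

definition av_converges :: "('k::field \<Rightarrow> real) \<Rightarrow> (nat \<Rightarrow> 'k) \<Rightarrow> 'k \<Rightarrow> bool" where
  "av_converges v s l \<longleftrightarrow> (\<forall>e>0. \<exists>N. \<forall>n\<ge>N. v (s n - l) < e)"

text \<open>A field K of characteristic 0 with an absolute value v is (up to isomorphism of valued
  fields) a finite extension of Q_p with an absolute value extending (a power of) the p-adic one
  iff v is a non-archimedean absolute value with v p < 1, K is complete for v, and K is locally
  compact (every bounded sequence in the closed unit ball has a Cauchy subsequence).\<close>

definition finite_ext_Qp :: "nat \<Rightarrow> ('k::field \<Rightarrow> real) \<Rightarrow> bool" where
  "finite_ext_Qp p v \<longleftrightarrow> prime p
     \<and> (\<forall>n::nat. 0 < n \<longrightarrow> v (of_nat n) \<noteq> 0)  \<comment> \<open>characteristic 0\<close>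
     \<and> abs_value v \<and> ultrametric_av v
     \<and> v (of_nat p) < 1
     \<and> (\<forall>s. av_cauchy v s \<longrightarrow> (\<exists>l. av_converges v s l))
     \<and> (\<forall>s. (\<forall>n. v (s n) \<le> 1) \<longrightarrow> (\<exists>g::nat \<Rightarrow> nat. strict_mono g \<and> av_cauchy v (s \<circ> g)))"

definition clustering :: "'k set \<Rightarrow> 'k set set \<Rightarrow> bool" where
  "clustering X \<C> \<longleftrightarrow> (\<forall>C\<in>\<C>. C \<noteq> {}) \<and> \<Union>\<C> = X
     \<and> (\<forall>C\<in>\<C>. \<forall>C'\<in>\<C>. C \<noteq> C' \<longrightarrow> C \<inter> C' = {})"

definition closed_disk :: "('k::field \<Rightarrow> real) \<Rightarrow> 'k \<Rightarrow> real \<Rightarrow> 'k set" where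
  "closed_disk v b r = {y. v (y - b) \<le> r}"

definition is_closed_disk :: "('k::field \<Rightarrow> real) \<Rightarrow> 'k set \<Rightarrow> bool" where
  "is_closed_disk v D \<longleftrightarrow> (\<exists>b r. 0 \<le> r \<and> D = closed_disk v b r)"

definition smallest_disk :: "('k::field \<Rightarrow> real) \<Rightarrow> 'k set \<Rightarrow> 'k set" where
  "smallest_disk v C = (THE D. is_closed_disk v D \<and> C \<subseteq> D
      \<and> (\<forall>D'. is_closed_disk v D' \<and> C \<subseteq> D' \<longrightarrow> D \<subseteq> D'))"

definition verticial :: "('k::field \<Rightarrow> real) \<Rightarrow> 'k set \<Rightarrow> 'k set set \<Rightarrow> bool" where
  "verticial v X \<C> \<longleftrightarrow> clustering X \<C> \<and> (\<forall>C\<in>\<C>. C = X \<inter> smallest_disk v C)"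

definition energy :: "('k::field \<Rightarrow> real) \<Rightarrow> 'k set set \<Rightarrow> ('k set \<Rightarrow> 'k) \<Rightarrow> real" where
  "energy v \<C> a = (\<Sum>C\<in>\<C>. \<Sum>x\<in>C. v (x - a C))"

definition family_of_centres :: "('k::field \<Rightarrow> real) \<Rightarrow> 'k set set \<Rightarrow> ('k set \<Rightarrow> 'k) \<Rightarrow> bool" where
  "family_of_centres v \<C> a \<longleftrightarrow> (\<forall>b. energy v \<C> a \<le> energy v \<C> b)"

definition intra :: "('k::field \<Rightarrow> real) \<Rightarrow> 'k set \<Rightarrow> 'k set set \<Rightarrow> ('k set \<Rightarrow> 'k) \<Rightarrow> real" where
  "intra v X \<C> a = energy v \<C> a / real (card X)"

definition inter :: "('k::field \<Rightarrow> real) \<Rightarrow> 'k set set \<Rightarrow> ('k set \<Rightarrow> 'k) \<Rightarrow> real" where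
  "inter v \<C> a = Min {v (a C - a C') | C C'. C \<in> \<C> \<and> C' \<in> \<C> \<and> C \<noteq> C'}"

end

theory Submission
  imports Defs
begin

text \<open>In an ultrametric field two closed disks are either nested or disjoint, and every point of a
  disk is a centre of it. A centre of a cluster must lie in every closed disk containing the
  cluster, since otherwise moving it into the disk strictly decreases every distance to the cluster.
  Hence the centre of a cluster lies in its smallest disk; for a verticial clustering these disks
  are pairwise disjoint, and the distance between two points of disjoint disks only depends on
  the disks. So all distances between centres, and trivially the minimal energy, are independent
  of the chosen centres.\<close>

lemma mem_closed_disk [simp]: "y \<in> closed_disk v b r \<longleftrightarrow> v (y - b) \<le> r"
  by (simp add: closed_disk_def)

locale ultrametric_abs_value =
  fixes v :: "'k::field \<Rightarrow> real"
  assumes abs_value: "abs_value v" and ultrametric: "ultrametric_av v"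
begin

lemma nonneg: "0 \<le> v x"
  using abs_value by (simp add: abs_value_def)

lemma eq_0_iff: "v x = 0 \<longleftrightarrow> x = 0"
  using abs_value by (simp add: abs_value_def)

lemma mult: "v (x * y) = v x * v y"
  using abs_value by (simp add: abs_value_def)

lemma add_le_max: "v (x + y) \<le> max (v x) (v y)"
  using ultrametric by (simp add: ultrametric_av_def)

lemma one: "v 1 = 1"
proof -
  have "v 1 * v 1 = v 1 * 1" using mult[of 1 1] by simp
  moreover have "v 1 \<noteq> 0" by (simp add: eq_0_iff)
  ultimately show ?thesis by simp
qed

lemma minus: "v (- x) = v x"
proof -
  have "v (- 1) * v (- 1) = 1" using mult[of "-1" "-1"] one by simp
  then have "v (- 1) = 1"
    using nonneg[of "-1"] by (metis abs_of_nonneg abs_square_eq_1 power2_eq_square)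
  then show ?thesis using mult[of "-1" x] by simp
qed

lemma diff_commute: "v (x - y) = v (y - x)"
  using minus[of "x - y"] by simp

lemma diff_le_max: "v (x - z) \<le> max (v (x - y)) (v (y - z))"
  using add_le_max[of "x - y" "y - z"] by simp

lemma add_eq_if_less: "v y < v x \<Longrightarrow> v (x + y) = v x"
  using add_le_max[of x y] add_le_max[of "x + y" "- y"] minus[of y] by simp

lemma closed_disk_recentre:
  assumes "z \<in> closed_disk v b r"
  shows "closed_disk v z r = closed_disk v b r"
proof (intro set_eqI iffI)
  fix x
  have "v (z - b) \<le> r" "v (b - z) \<le> r" using assms diff_commute[of z b] by simp_all
  show "x \<in> closed_disk v b r" if "x \<in> closed_disk v z r"
    using that \<open>v (z - b) \<le> r\<close> diff_le_max[of x b z] by (auto simp: le_max_iff_disj)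
  show "x \<in> closed_disk v z r" if "x \<in> closed_disk v b r"
    using that \<open>v (b - z) \<le> r\<close> diff_le_max[of x z b] by (auto simp: le_max_iff_disj)
qed

lemma closed_disks_nested_or_disjoint:
  assumes "closed_disk v b r \<inter> closed_disk v b' r' \<noteq> {}"
  shows "closed_disk v b r \<subseteq> closed_disk v b' r' \<or> closed_disk v b' r' \<subseteq> closed_disk v b r"
proof -
  obtain z where "z \<in> closed_disk v b r" "z \<in> closed_disk v b' r'" using assms by blast
  then have "closed_disk v b r = closed_disk v z r" "closed_disk v b' r' = closed_disk v z r'"
    by (simp_all add: closed_disk_recentre)
  then show ?thesis by (cases "r \<le> r'") auto
qed

lemma diff_eq_across_disjoint_disks:
  assumes disjoint: "closed_disk v b r \<inter> closed_disk v b' r' = {}"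
    and "u \<in> closed_disk v b r" "u' \<in> closed_disk v b' r'"
  shows "v (u - u') = v (b - b')"
proof -
  have "u' \<notin> closed_disk v u r" "u \<notin> closed_disk v u' r'"
    using assms closed_disk_recentre by blast+
  then have "max r r' < v (u - u')"
    using diff_commute[of u' u] by simp
  moreover have "v (b - u + (u' - b')) \<le> max r r'"
    using assms add_le_max[of "b - u" "u' - b'"] diff_commute[of b u] by simp
  ultimately have "v (u - u' + (b - u + (u' - b'))) = v (u - u')"
    by (intro add_eq_if_less) (auto simp: le_max_iff_disj)
  then show ?thesis by simp
qed

lemma smallest_disk_eq:
  assumes "finite C" "c \<in> C"
  shows "smallest_disk v C = closed_disk v c (Max ((\<lambda>x. v (x - c)) ` C))"
    (is "_ = closed_disk v c ?r")
proof -
  have contains: "C \<subseteq> closed_disk v c ?r" using assms by auto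
  have "?r \<in> (\<lambda>x. v (x - c)) ` C" using assms by (intro Max_in) auto
  then obtain x0 where x0: "x0 \<in> C" "?r = v (x0 - c)" by auto
  have minimal: "closed_disk v c ?r \<subseteq> D" if "is_closed_disk v D" "C \<subseteq> D" for D
  proof -
    obtain b r where D: "D = closed_disk v b r" using \<open>is_closed_disk v D\<close>
      by (auto simp: is_closed_disk_def)
    with \<open>C \<subseteq> D\<close> assms(2) have "D = closed_disk v c r" using closed_disk_recentre by blast
    with \<open>C \<subseteq> D\<close> x0 have "?r \<le> r" by auto
    with \<open>D = closed_disk v c r\<close> show ?thesis by auto
  qed
  have "0 \<le> ?r" using subsetD[OF contains assms(2)] nonneg[of 0] by simp
  then have "is_closed_disk v (closed_disk v c ?r)" by (auto simp: is_closed_disk_def)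
  with contains minimal show ?thesis
    unfolding smallest_disk_def by (intro the_equality) (auto intro: subset_antisym)
qed

lemma smallest_disk_is_closed_disk:
  assumes "finite C" "C \<noteq> {}"
  obtains c r where "smallest_disk v C = closed_disk v c r" "C \<subseteq> closed_disk v c r"
proof -
  from assms obtain c where "c \<in> C" by blast
  with assms(1) show ?thesis using that smallest_disk_eq by fastforce
qed

lemma family_of_centres_in_closed_disk:
  assumes centres: "family_of_centres v \<C> a" and "finite \<C>" "C \<in> \<C>"
    and "finite C" "C \<noteq> {}" and contains: "C \<subseteq> closed_disk v c r"
  shows "a C \<in> closed_disk v c r"
proof (rule ccontr)
  assume "a C \<notin> closed_disk v c r"
  then have far: "r < v (c - a C)" using diff_commute by simp
  have closer: "v (x - c) < v (x - a C)" if "x \<in> C" for x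
  proof -
    have "v (x - c) \<le> r" using contains that by auto
    with far have "v (c - a C + (x - c)) = v (c - a C)" by (intro add_eq_if_less) simp
    with \<open>v (x - c) \<le> r\<close> far show ?thesis by (simp add: algebra_simps)
  qed
  let ?E = "\<lambda>a C. \<Sum>x\<in>C. v (x - a C)"
  have split: "energy v \<C> f = ?E f C + (\<Sum>C'\<in>\<C> - {C}. ?E f C')" for f
    unfolding energy_def using sum.remove[OF \<open>finite \<C>\<close> \<open>C \<in> \<C>\<close>] by simp
  have "?E (a(C := c)) C < ?E a C"
    using sum_strict_mono[OF \<open>finite C\<close> \<open>C \<noteq> {}\<close> closer] by simp
  moreover have "(\<Sum>C'\<in>\<C> - {C}. ?E (a(C := c)) C') = (\<Sum>C'\<in>\<C> - {C}. ?E a C')"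
    by (intro sum.cong) auto
  ultimately have "energy v \<C> (a(C := c)) < energy v \<C> a"
    using split[of a] split[of "a(C := c)"] by linarith
  with centres show False by (simp add: family_of_centres_def not_le[symmetric])
qed

lemma verticial_centre_distance_eq:
  assumes "finite X" "verticial v X \<C>"
    and "family_of_centres v \<C> a" "family_of_centres v \<C> b"
    and "C \<in> \<C>" "C' \<in> \<C>" "C \<noteq> C'"
  shows "v (a C - a C') = v (b C - b C')"
proof -
  have "C \<noteq> {}" "C' \<noteq> {}" "C \<inter> C' = {}" "\<C> \<subseteq> Pow X"
    and vertices: "C = X \<inter> smallest_disk v C" "C' = X \<inter> smallest_disk v C'"
    using assms(2,5-7) by (auto simp: verticial_def clustering_def)
  then have "finite \<C>" "finite C" "finite C'"
    using \<open>finite X\<close> assms(5,6) by (auto intro: finite_subset)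
  obtain c r where D: "smallest_disk v C = closed_disk v c r" "C \<subseteq> closed_disk v c r"
    using smallest_disk_is_closed_disk[OF \<open>finite C\<close> \<open>C \<noteq> {}\<close>] by blast
  obtain c' r' where D': "smallest_disk v C' = closed_disk v c' r'" "C' \<subseteq> closed_disk v c' r'"
    using smallest_disk_is_closed_disk[OF \<open>finite C'\<close> \<open>C' \<noteq> {}\<close>] by blast
  have disjoint: "closed_disk v c r \<inter> closed_disk v c' r' = {}"
  proof (rule ccontr)
    assume "closed_disk v c r \<inter> closed_disk v c' r' \<noteq> {}"
    then have "C \<subseteq> C' \<or> C' \<subseteq> C"
      using closed_disks_nested_or_disjoint vertices D(1) D'(1) by blast
    with \<open>C \<inter> C' = {}\<close> \<open>C \<noteq> {}\<close> \<open>C' \<noteq> {}\<close> show False by blast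
  qed
  have "v (f C - f C') = v (c - c')" if "family_of_centres v \<C> f" for f
  proof (rule diff_eq_across_disjoint_disks[OF disjoint])
    show "f C \<in> closed_disk v c r"
      using family_of_centres_in_closed_disk[OF that \<open>finite \<C>\<close>] assms(5) \<open>finite C\<close> \<open>C \<noteq> {}\<close> D(2) .
    show "f C' \<in> closed_disk v c' r'"
      using family_of_centres_in_closed_disk[OF that \<open>finite \<C>\<close>] assms(6) \<open>finite C'\<close> \<open>C' \<noteq> {}\<close> D'(2) .
  qed
  with assms(3,4) show ?thesis by simp
qed

end

theorem lemma2:
  fixes p :: nat and v :: "'k::field \<Rightarrow> real" and X :: "'k set" and \<C> :: "'k set set"
    and a b :: "'k set \<Rightarrow> 'k"
  assumes "finite_ext_Qp p v"
    and "finite X" and "X \<noteq> {}"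
    and "verticial v X \<C>"
    and "family_of_centres v \<C> a"
    and "family_of_centres v \<C> b"
  shows "intra v X \<C> a = intra v X \<C> b \<and> inter v \<C> a = inter v \<C> b"
proof -
  interpret ultrametric_abs_value v
    using assms(1) by unfold_locales (simp_all add: finite_ext_Qp_def)
  have "energy v \<C> a = energy v \<C> b"
    using assms(5,6) by (simp add: family_of_centres_def order_antisym)
  moreover have "{v (a C - a C') | C C'. C \<in> \<C> \<and> C' \<in> \<C> \<and> C \<noteq> C'}
      = {v (b C - b C') | C C'. C \<in> \<C> \<and> C' \<in> \<C> \<and> C \<noteq> C'}"
    using verticial_centre_distance_eq[OF assms(2,4-6)] by metis
  ultimately show ?thesis by (simp add: intra_def inter_def)
qed

end
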